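(* Let $p\in\mathscr P(\mathbb C)$. Then $\mathcal F^{p(\cdot)}$ is a closed subspace of $\mathcal L^{p(\cdot)}$, and hence a Banach space.
   Context: $A$ denotes Lebesgue area measure on $\mathbb C$. A variable exponent is a measurable function $p:\mathbb C\to[1,\infty)$; $p^+=\operatorname{ess\,sup}_{\mathbb C}p$, and $\mathscr P(\mathbb C)$ is the set of variable exponents with $p^+<\infty$. $\mathcal L^{p(\cdot)}$ is the space of measurable $f:\mathbb C\to\mathbb C$ such that $\int_{\mathbb C}(\lambda|f(z)|)^{p(z)}e^{-p(z)|z|^2}\,dA(z)<\infty$ for some $\lambda>0$, normed by $\|f\|_{\mathcal L^{p(\cdot)}}=\inf\{\lambda>0:\int_{\mathbb C}(|f(z)|/\lambda)^{p(z)}e^{-p(z)|z|^2}\,dA(z)\le1\}$ (a Banach space). The variable exponent Fock space $\mathcal F^{p(\cdot)}$ is the set of entire functions belonging to $\mathcal L^{p(\cdot)}$, with the same norm. *)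

theory Defs
  imports "HOL-Analysis.Analysis"
begin

definition var_exponent :: "(complex \<Rightarrow> real) \<Rightarrow> bool" where
  "var_exponent p \<longleftrightarrow> p \<in> borel_measurable lebesgue \<and> (\<forall>z. 1 \<le> p z)"

definition bounded_var_exponent :: "(complex \<Rightarrow> real) \<Rightarrow> bool" where
  "bounded_var_exponent p \<longleftrightarrow> var_exponent p \<and> (\<exists>M. AE z in lebesgue. p z \<le> M)"

definition fock_modular :: "(complex \<Rightarrow> real) \<Rightarrow> (complex \<Rightarrow> complex) \<Rightarrow> ennreal" where
  "fock_modular p f =
     (\<integral>\<^sup>+ z. ennreal ((cmod (f z)) powr (p z) * exp (- p z * (cmod z)\<^sup>2)) \<partial>lebesgue)"

definition Lvar :: "(complex \<Rightarrow> real) \<Rightarrow> (complex \<Rightarrow> complex) set" where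
  "Lvar p = {f. f \<in> borel_measurable lebesgue \<and>
                 (\<exists>lam>0. fock_modular p (\<lambda>z. complex_of_real lam * f z) < \<infinity>)}"

definition Lvar_norm :: "(complex \<Rightarrow> real) \<Rightarrow> (complex \<Rightarrow> complex) \<Rightarrow> real" where
  "Lvar_norm p f = Inf {lam. 0 < lam \<and> fock_modular p (\<lambda>z. f z / complex_of_real lam) \<le> 1}"

definition Fvar :: "(complex \<Rightarrow> real) \<Rightarrow> (complex \<Rightarrow> complex) set" where
  "Fvar p = {f \<in> Lvar p. f holomorphic_on UNIV}"

end

theory Submission
  imports Defs "HOL-Complex_Analysis.Complex_Analysis"
begin

text \<open>
  For an entire function \<open>G\<close>, averaging Cauchy's circle mean over all rotations of the disc
  gives \<open>pi |G z| \<le> \<integral>\<^sub>D |G| dA\<close> over the unit disc \<open>D\<close> centred at \<open>z\<close>. On \<open>D\<close> we have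
  \<open>1 \<le> p \<le> M\<close> and \<open>|w| \<le> |z| + 1\<close>, so \<open>|G| \<le> 1 + |G|^p \<le> 1 + E |G|^p exp (-p |w|\<^sup>2)\<close> with
  \<open>E = exp (M (|z| + 1)\<^sup>2)\<close>; hence \<open>|G z| \<le> 1 + E / pi\<close> whenever the modular of \<open>G\<close> is at
  most 1. A sequence of entire functions that is Cauchy in the Luxemburg norm is therefore
  locally uniformly Cauchy, its pointwise limit \<open>g\<close> is entire, and Fatou's lemma for the
  modular shows that the sequence converges to \<open>g\<close> in norm. If it also converges in norm to
  \<open>f\<close>, convexity of the modular forces \<open>g - f\<close> to have norm 0, i.e. \<open>g = f\<close> almost everywhere.
\<close>

section \<open>Rotation invariance of area measure\<close>

lemma borel_measurable_Complex_pair: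
  "(\<lambda>(x, y). Complex x y) \<in> borel_measurable (lborel \<Otimes>\<^sub>M lborel)"
proof -
  have "continuous_on UNIV (\<lambda>(x::real, y::real). Complex x y)"
    unfolding Complex_eq case_prod_unfold by (intro continuous_intros)
  then show ?thesis
    by (simp add: lborel_prod borel_measurable_continuous_onI)
qed

lemma lborel_complex_eq_distr_pair:
  "lborel = distr (lborel \<Otimes>\<^sub>M lborel) borel (\<lambda>(x, y). Complex x y)"
proof (rule lborel_eqI)
  fix l u :: complex
  assume "\<And>b. b \<in> Basis \<Longrightarrow> l \<bullet> b \<le> u \<bullet> b"
  from this[of 1] this[of \<i>] have le: "Re l \<le> Re u" "Im l \<le> Im u" by auto
  have "(\<lambda>(x, y). Complex x y) -` box l u \<inter> space (lborel \<Otimes>\<^sub>M lborel)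
        = {Re l<..<Re u} \<times> {Im l<..<Im u}"
    by (auto simp: box_def Basis_complex_def space_pair_measure)
  then have "emeasure (distr (lborel \<Otimes>\<^sub>M lborel) borel (\<lambda>(x, y). Complex x y)) (box l u)
      = emeasure (lborel \<Otimes>\<^sub>M lborel) ({Re l<..<Re u} \<times> {Im l<..<Im u})"
    by (simp add: emeasure_distr borel_measurable_Complex_pair)
  also have "\<dots> = (\<Prod>b\<in>Basis. (u - l) \<bullet> b)"
    using le by (simp add: lborel.emeasure_pair_measure_Times Basis_complex_def ennreal_mult)
  finally show "emeasure (distr (lborel \<Otimes>\<^sub>M lborel) borel (\<lambda>(x, y). Complex x y)) (box l u)
      = (\<Prod>b\<in>Basis. (u - l) \<bullet> b)" .
qed simp

lemma nn_integral_lborel_complex: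
  fixes f :: "complex \<Rightarrow> ennreal"
  assumes f: "f \<in> borel_measurable borel"
  shows "(\<integral>\<^sup>+ w. f w \<partial>lborel) = (\<integral>\<^sup>+ x. \<integral>\<^sup>+ y. f (Complex x y) \<partial>lborel \<partial>lborel)"
    and "(\<integral>\<^sup>+ w. f w \<partial>lborel) = (\<integral>\<^sup>+ y. \<integral>\<^sup>+ x. f (Complex x y) \<partial>lborel \<partial>lborel)"
proof -
  have f_pair: "(\<lambda>(x, y). f (Complex x y)) \<in> borel_measurable (lborel \<Otimes>\<^sub>M lborel)"
    using measurable_compose[OF borel_measurable_Complex_pair f] by (simp add: case_prod_unfold)
  have "(\<integral>\<^sup>+ w. f w \<partial>lborel) = (\<integral>\<^sup>+ (x, y). f (Complex x y) \<partial>(lborel \<Otimes>\<^sub>M lborel))"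
  proof -
    have "f \<in> borel_measurable (distr (lborel \<Otimes>\<^sub>M lborel) borel (\<lambda>(x, y). Complex x y))"
      using f by (simp add: measurable_cong_sets[OF sets_distr refl])
    from nn_integral_distr[OF borel_measurable_Complex_pair this] show ?thesis
      unfolding lborel_complex_eq_distr_pair[symmetric] by (simp add: case_prod_unfold)
  qed
  then show "(\<integral>\<^sup>+ w. f w \<partial>lborel) = (\<integral>\<^sup>+ x. \<integral>\<^sup>+ y. f (Complex x y) \<partial>lborel \<partial>lborel)"
    and "(\<integral>\<^sup>+ w. f w \<partial>lborel) = (\<integral>\<^sup>+ y. \<integral>\<^sup>+ x. f (Complex x y) \<partial>lborel \<partial>lborel)"
    using lborel.nn_integral_fst[OF f_pair] lborel_pair.Fubini'[OF f_pair] by simp_all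
qed

definition shear_Re :: "real \<Rightarrow> complex \<Rightarrow> complex" where
  "shear_Re a w = Complex (Re w + a * Im w) (Im w)"

definition shear_Im :: "real \<Rightarrow> complex \<Rightarrow> complex" where
  "shear_Im b w = Complex (Re w) (Im w + b * Re w)"

lemma continuous_on_shear: "continuous_on UNIV (shear_Re a)" "continuous_on UNIV (shear_Im b)"
  unfolding shear_Re_def shear_Im_def Complex_eq by (intro continuous_intros)+

lemma nn_integral_lborel_shear:
  fixes f :: "complex \<Rightarrow> ennreal"
  assumes f: "f \<in> borel_measurable borel"
  shows "(\<integral>\<^sup>+ w. f (shear_Re a w) \<partial>lborel) = (\<integral>\<^sup>+ w. f w \<partial>lborel)"
    and "(\<integral>\<^sup>+ w. f (shear_Im b w) \<partial>lborel) = (\<integral>\<^sup>+ w. f w \<partial>lborel)"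
proof -
  have f_Re: "(\<lambda>x. f (Complex x y)) \<in> borel_measurable borel" for y
    by (rule measurable_compose[OF borel_measurable_continuous_onI f])
      (unfold Complex_eq, intro continuous_intros)
  have f_Im: "(\<lambda>y. f (Complex x y)) \<in> borel_measurable borel" for x
    by (rule measurable_compose[OF borel_measurable_continuous_onI f])
      (unfold Complex_eq, intro continuous_intros)
  have "(\<integral>\<^sup>+ x. f (Complex (x + a * y) y) \<partial>lborel) = (\<integral>\<^sup>+ x. f (Complex x y) \<partial>lborel)" for y
    using nn_integral_real_affine[OF f_Re[of y], of 1 "a * y"] by (simp add: add.commute)
  then show "(\<integral>\<^sup>+ w. f (shear_Re a w) \<partial>lborel) = (\<integral>\<^sup>+ w. f w \<partial>lborel)"
    using measurable_compose[OF borel_measurable_continuous_onI[OF continuous_on_shear(1)] f]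
    by (simp add: nn_integral_lborel_complex(2) f shear_Re_def)
  have "(\<integral>\<^sup>+ y. f (Complex x (y + b * x)) \<partial>lborel) = (\<integral>\<^sup>+ y. f (Complex x y) \<partial>lborel)" for x
    using nn_integral_real_affine[OF f_Im[of x], of 1 "b * x"] by (simp add: add.commute)
  then show "(\<integral>\<^sup>+ w. f (shear_Im b w) \<partial>lborel) = (\<integral>\<^sup>+ w. f w \<partial>lborel)"
    using measurable_compose[OF borel_measurable_continuous_onI[OF continuous_on_shear(2)] f]
    by (simp add: nn_integral_lborel_complex(1) f shear_Im_def)
qed

text \<open>Paeth's decomposition of a rotation into three shears.\<close>

lemma mult_unit_eq_three_shears:
  assumes u: "cmod u = 1" "u \<noteq> -1"
  defines "t \<equiv> - Im u / (1 + Re u)"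
  shows "u * w = shear_Re t (shear_Im (Im u) (shear_Re t w))"
proof -
  have unit: "(Re u)\<^sup>2 + (Im u)\<^sup>2 = 1"
    using u(1) by (simp add: cmod_def)
  have "1 + Re u \<noteq> 0"
  proof
    assume "1 + Re u = 0"
    then have "Re u = -1" by simp
    moreover from this unit have "Im u = 0" by simp
    ultimately show False using u(2) by (simp add: complex_eq_iff)
  qed
  then have "t * (1 + Re u) = - Im u" "Im u * t = Re u - 1"
    using unit by (simp_all add: t_def field_simps power2_eq_square)
  then show ?thesis
    by (simp add: complex_eq_iff shear_Re_def shear_Im_def) algebra
qed

lemma nn_integral_lborel_mult_unit:
  fixes f :: "complex \<Rightarrow> ennreal"
  assumes f: "f \<in> borel_measurable borel" and u: "cmod u = 1"
  shows "(\<integral>\<^sup>+ w. f (u * w) \<partial>lborel) = (\<integral>\<^sup>+ w. f w \<partial>lborel)"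
proof -
  have rotate: "(\<integral>\<^sup>+ w. f (u * w) \<partial>lborel) = (\<integral>\<^sup>+ w. f w \<partial>lborel)"
    if f: "f \<in> borel_measurable borel" and "cmod u = 1" "u \<noteq> -1" for f u
  proof -
    define t where "t = - Im u / (1 + Re u)"
    have f_shear: "(\<lambda>w. f (shear_Re t w)) \<in> borel_measurable borel"
      by (rule measurable_compose[OF borel_measurable_continuous_onI[OF continuous_on_shear(1)] f])
    have f_shear2: "(\<lambda>w. f (shear_Re t (shear_Im (Im u) w))) \<in> borel_measurable borel"
      by (rule measurable_compose[OF borel_measurable_continuous_onI[OF continuous_on_shear(2)] f_shear])
    show ?thesis
      using nn_integral_lborel_shear(1)[OF f_shear2, of t] nn_integral_lborel_shear(2)[OF f_shear, of "Im u"]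
        nn_integral_lborel_shear(1)[OF f, of t]
      by (simp add: mult_unit_eq_three_shears[OF that(2,3)] t_def)
  qed
  show ?thesis
  proof (cases "u = -1")
    case True
    have f_i: "(\<lambda>w. f (\<i> * w)) \<in> borel_measurable borel"
      by (rule measurable_compose[OF borel_measurable_continuous_onI f]) (intro continuous_intros)
    have "(\<integral>\<^sup>+ w. f (u * w) \<partial>lborel) = (\<integral>\<^sup>+ w. f (\<i> * (\<i> * w)) \<partial>lborel)"
      using True by (simp flip: mult.assoc)
    also have "\<dots> = (\<integral>\<^sup>+ w. f w \<partial>lborel)"
      using rotate[OF f_i, of \<i>] rotate[OF f, of \<i>] by (simp add: complex_eq_iff)
    finally show ?thesis .
  qed (use rotate[OF f u] in simp)
qed

section \<open>The sub-mean-value property on discs\<close>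

lemma entire_circle_mean:
  assumes H: "H holomorphic_on UNIV"
  shows "((\<lambda>t. H (cis (2 * pi * t))) has_integral H 0) {0..1}"
proof -
  have "((\<lambda>w. H w / (w - 0)) has_contour_integral (2 * of_real pi * \<i> * H 0)) (circlepath 0 1)"
    by (rule Cauchy_integral_circlepath)
      (auto intro: holomorphic_on_imp_continuous_on holomorphic_on_subset[OF H])
  then have contour: "((\<lambda>t. H (circlepath 0 1 t) / circlepath 0 1 t
      * vector_derivative (circlepath 0 1) (at t within {0..1})) has_integral (2 * of_real pi * \<i> * H 0)) {0..1}"
    by (simp add: has_contour_integral_def)
  have integrand: "H (circlepath 0 1 t) / circlepath 0 1 t
      * vector_derivative (circlepath 0 1) (at t within {0..1}) = 2 * of_real pi * \<i> * H (cis (2 * pi * t))"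
    if "t \<in> {0..1}" for t
    using that by (simp add: vector_derivative_circlepath01) (simp add: circlepath cis_conv_exp mult.commute mult.left_commute)
  from has_integral_cong[THEN iffD1, OF integrand contour]
  have "((\<lambda>t. 2 * of_real pi * \<i> * H (cis (2 * pi * t))) has_integral (2 * of_real pi * \<i> * H 0)) {0..1}" .
  from has_integral_mult_right[OF this, of "1 / (2 * of_real pi * \<i>)"] show ?thesis
    by simp
qed

lemma entire_norm_le_nn_integral_circle:
  assumes G: "G holomorphic_on UNIV"
  shows "ennreal (cmod (G 0)) \<le> (\<integral>\<^sup>+ t. ennreal (cmod (G (cis (2 * pi * t) * w))) * indicator {0..1} t \<partial>lborel)"
proof -
  let ?f = "\<lambda>t. G (cis (2 * pi * t) * w)"
  have cont: "continuous_on UNIV G"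
    using G holomorphic_on_imp_continuous_on by blast
  have cont_f: "continuous_on UNIV (\<lambda>t. cmod (?f t))"
    unfolding cis_conv_exp by (intro continuous_intros continuous_on_compose2[OF cont]) auto
  have int: "((\<lambda>t. cmod (?f t)) has_integral integral {0..1} (\<lambda>t. cmod (?f t))) {0..1}"
    by (rule integrable_integral[OF integrable_continuous_interval[OF continuous_on_subset[OF cont_f subset_UNIV]]])
  have "(\<lambda>u. G (u * w)) holomorphic_on UNIV"
    by (intro holomorphic_on_compose_gen[OF _ G, unfolded o_def] holomorphic_intros) auto
  from entire_circle_mean[OF this] have mean: "(?f has_integral G 0) {0..1}"
    by simp
  have "cmod (G 0) \<le> integral {0..1} (\<lambda>t. cmod (?f t))"
    using integral_norm_bound_integral[OF has_integral_integrable[OF mean] has_integral_integrable[OF int]]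
    by (simp add: integral_unique[OF mean])
  also have "ennreal \<dots> = (\<integral>\<^sup>+ t. ennreal (cmod (?f t)) * indicator {0..1} t \<partial>lborel)"
    using nn_integral_has_integral_lebesgue'[OF _ int] by simp
  finally show ?thesis
    by (simp add: ennreal_leI)
qed

text \<open>
  Every rotation of the disc integral equals the disc integral; integrating over all rotations
  and swapping the integrals, the circle mean bounds the integrand from below by \<open>|G 0|\<close>.
\<close>

lemma entire_sub_mean_value_unit_disc:
  assumes G: "G holomorphic_on UNIV"
  shows "ennreal (pi * cmod (G 0)) \<le> (\<integral>\<^sup>+ w. indicator (ball 0 1) w * ennreal (cmod (G w)) \<partial>lborel)"
proof -
  let ?B = "ball (0::complex) 1"
  have cont: "continuous_on UNIV G"
    using G holomorphic_on_imp_continuous_on by blast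
  have [measurable]: "?B \<in> sets borel"
    by simp
  have [measurable]: "(\<lambda>w. cmod (G w)) \<in> borel_measurable borel"
    by (intro borel_measurable_continuous_onI continuous_intros cont)
  have [measurable]: "(\<lambda>x. cmod (G (cis (2 * pi * fst x) * snd x))) \<in> borel_measurable (lborel \<Otimes>\<^sub>M lborel)"
    unfolding lborel_prod measurable_lborel2 cis_conv_exp
    by (intro borel_measurable_continuous_onI continuous_intros continuous_on_compose2[OF cont]) auto
  define A where "A = (\<integral>\<^sup>+ w. indicator ?B w * ennreal (cmod (G w)) \<partial>lborel)"
  define h where "h t w = indicator {0..1} t * indicator ?B w * ennreal (cmod (G (cis (2 * pi * t) * w)))"
    for t w
  have h_meas: "case_prod h \<in> borel_measurable (lborel \<Otimes>\<^sub>M lborel)"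
    unfolding h_def by measurable
  have rotated: "(\<integral>\<^sup>+ w. h t w \<partial>lborel) = indicator {0..1} t * A" for t
  proof -
    have "(\<lambda>w. indicator ?B w * ennreal (cmod (G w))) \<in> borel_measurable borel"
      by measurable
    from nn_integral_lborel_mult_unit[OF this, of "cis (2 * pi * t)"]
    have "(\<integral>\<^sup>+ w. indicator ?B w * ennreal (cmod (G (cis (2 * pi * t) * w))) \<partial>lborel) = A"
      by (simp add: A_def norm_mult indicator_def)
    then show ?thesis
      unfolding h_def mult.assoc by (subst nn_integral_cmult) auto
  qed
  have circle: "indicator ?B w * ennreal (cmod (G 0)) \<le> (\<integral>\<^sup>+ t. h t w \<partial>lborel)" for w
  proof -
    have [measurable]: "(\<lambda>t. cmod (G (cis (2 * pi * t) * w))) \<in> borel_measurable borel"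
      unfolding cis_conv_exp
      by (intro borel_measurable_continuous_onI continuous_intros continuous_on_compose2[OF cont]) auto
    have "(\<lambda>t. ennreal (cmod (G (cis (2 * pi * t) * w))) * indicator {0..1} t) \<in> borel_measurable lborel"
      by measurable
    from nn_integral_cmult[OF this, of "indicator ?B w"] show ?thesis
      using mult_left_mono[OF entire_norm_le_nn_integral_circle[OF G, of w], of "indicator ?B w"]
      unfolding h_def by (simp add: mult_ac)
  qed
  have "ennreal (pi * cmod (G 0)) = (\<integral>\<^sup>+ w. indicator ?B w * ennreal (cmod (G 0)) \<partial>lborel)"
    by (simp add: nn_integral_cmult_indicator emeasure_ball unit_ball_vol_2 ennreal_mult mult.commute)
  also have "\<dots> \<le> (\<integral>\<^sup>+ w. \<integral>\<^sup>+ t. h t w \<partial>lborel \<partial>lborel)"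
    by (intro nn_integral_mono circle)
  also have "\<dots> = (\<integral>\<^sup>+ t. \<integral>\<^sup>+ w. h t w \<partial>lborel \<partial>lborel)"
    using lborel_pair.Fubini'[OF h_meas] by simp
  also have "\<dots> = A"
    by (simp add: rotated nn_integral_cmult_indicator mult.commute)
  finally show ?thesis unfolding A_def .
qed

lemma entire_sub_mean_value_disc:
  assumes G: "G holomorphic_on UNIV"
  shows "ennreal (pi * cmod (G z)) \<le> (\<integral>\<^sup>+ w. indicator (ball z 1) w * ennreal (cmod (G w)) \<partial>lborel)"
proof -
  have "(\<lambda>w. G (z + w)) holomorphic_on UNIV"
    by (intro holomorphic_on_compose_gen[OF _ G, unfolded o_def] holomorphic_intros) auto
  note mean = entire_sub_mean_value_unit_disc[OF this]
  have "continuous_on UNIV (\<lambda>w. cmod (G w))"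
    using G holomorphic_on_imp_continuous_on by (intro continuous_intros) blast
  then have [measurable]: "(\<lambda>w. cmod (G w)) \<in> borel_measurable borel"
    by (rule borel_measurable_continuous_onI)
  have [measurable]: "ball z 1 \<in> sets borel"
    by simp
  have "(\<lambda>w. indicator (ball z 1) w * ennreal (cmod (G w))) \<in> borel_measurable borel"
    by measurable
  then have "(\<lambda>w. indicator (ball z 1) w * ennreal (cmod (G w))) \<in> borel_measurable (distr lborel borel ((+) z))"
    by (simp add: measurable_cong_sets[OF sets_distr refl])
  from nn_integral_distr[OF _ this] mean show ?thesis
    by (simp add: lborel_distr_plus indicator_def dist_norm)
qed

lemma entire_measurable_lebesgue:
  assumes "G holomorphic_on UNIV"
  shows "G \<in> borel_measurable lebesgue"
proof -
  have "continuous_on UNIV G"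
    using assms holomorphic_on_imp_continuous_on by blast
  then show ?thesis
    by (intro measurable_completion) (simp add: borel_measurable_continuous_onI)
qed

section \<open>The modular\<close>

lemma var_exponent_ge_1: "var_exponent p \<Longrightarrow> 1 \<le> p z"
  by (simp add: var_exponent_def)

lemma var_exponent_measurable[measurable]: "var_exponent p \<Longrightarrow> p \<in> borel_measurable lebesgue"
  by (simp add: var_exponent_def)

lemma fock_integrand_measurable:
  assumes p: "var_exponent p" and H: "H \<in> borel_measurable lebesgue"
  shows "(\<lambda>z. ennreal (cmod (H z) powr p z * exp (- p z * (cmod z)\<^sup>2))) \<in> borel_measurable lebesgue"
proof -
  have [measurable]: "(\<lambda>z::complex. z) \<in> borel_measurable lebesgue"
    by (rule measurable_completion) simp
  show ?thesis
    using p H by measurable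
qed

lemma fock_modular_mono:
  assumes p: "var_exponent p" and le: "\<And>z. cmod (H1 z) \<le> cmod (H2 z)"
  shows "fock_modular p H1 \<le> fock_modular p H2"
  unfolding fock_modular_def
proof (intro nn_integral_mono ennreal_leI mult_right_mono)
  show "cmod (H1 z) powr p z \<le> cmod (H2 z) powr p z" for z
    using var_exponent_ge_1[OF p, of z] le[of z] by (intro powr_mono2) auto
qed simp

lemma fock_modular_cong:
  "(\<And>z. cmod (H1 z) = cmod (H2 z)) \<Longrightarrow> fock_modular p H1 = fock_modular p H2"
  unfolding fock_modular_def by simp

lemma fock_modular_zero [simp]: "fock_modular p (\<lambda>z. 0) = 0"
  unfolding fock_modular_def by simp

lemma powr_convex_comb_le:
  fixes x y t q :: real
  assumes "0 \<le> x" "0 \<le> y" "0 \<le> t" "t \<le> 1" "1 \<le> q"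
  shows "((1 - t) * x + t * y) powr q \<le> (1 - t) * x powr q + t * y powr q"
proof -
  have scale: "(s * v) powr q \<le> s * v powr q" if "0 \<le> s" "s \<le> 1" "0 \<le> v" for s v :: real
  proof -
    have "s powr q \<le> s"
      using that powr_mono'[of 1 q s] assms(5) by (cases "s = 0") auto
    then show ?thesis
      using that by (simp add: powr_mult mult_right_mono)
  qed
  consider "x = 0" | "y = 0" | "0 < x" "0 < y"
    using assms by linarith
  then show ?thesis
  proof cases
    case 1
    then show ?thesis using scale[of t y] assms by simp
  next
    case 2
    then show ?thesis using scale[of "1 - t" x] assms by simp
  next
    case 3
    then show ?thesis
      using convex_onD[OF powr_convex[OF assms(5)], of t x y] assms by simp
  qed
qed

lemma fock_modular_convex:
  assumes p: "var_exponent p" and A: "A \<in> borel_measurable lebesgue" and B: "B \<in> borel_measurable lebesgue"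
    and t: "0 \<le> t" "t \<le> 1"
  shows "fock_modular p (\<lambda>z. of_real (1 - t) * A z + of_real t * B z)
    \<le> ennreal (1 - t) * fock_modular p A + ennreal t * fock_modular p B"
proof -
  let ?w = "\<lambda>z. exp (- p z * (cmod z)\<^sup>2)"
  have pointwise: "ennreal (cmod (of_real (1 - t) * A z + of_real t * B z) powr p z * ?w z)
      \<le> ennreal (1 - t) * ennreal (cmod (A z) powr p z * ?w z)
        + ennreal t * ennreal (cmod (B z) powr p z * ?w z)" for z
  proof -
    have "cmod (of_real (1 - t) * A z + of_real t * B z) \<le> (1 - t) * cmod (A z) + t * cmod (B z)"
      using t norm_triangle_ineq[of "of_real (1 - t) * A z" "of_real t * B z"]
      by (simp add: norm_mult del: of_real_diff)
    then have "cmod (of_real (1 - t) * A z + of_real t * B z) powr p z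
        \<le> ((1 - t) * cmod (A z) + t * cmod (B z)) powr p z"
      using var_exponent_ge_1[OF p, of z] by (intro powr_mono2) auto
    also have "\<dots> \<le> (1 - t) * cmod (A z) powr p z + t * cmod (B z) powr p z"
      using t var_exponent_ge_1[OF p, of z] by (intro powr_convex_comb_le) auto
    finally have "cmod (of_real (1 - t) * A z + of_real t * B z) powr p z * ?w z
        \<le> ((1 - t) * cmod (A z) powr p z + t * cmod (B z) powr p z) * ?w z"
      by (rule mult_right_mono) simp
    then have "cmod (of_real (1 - t) * A z + of_real t * B z) powr p z * ?w z
        \<le> (1 - t) * (cmod (A z) powr p z * ?w z) + t * (cmod (B z) powr p z * ?w z)"
      by (simp only: distrib_right mult.assoc)
    then show ?thesis
      using t by (simp add: ennreal_leI ennreal_plus[symmetric] ennreal_mult[symmetric] del: ennreal_plus)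
  qed
  have "fock_modular p (\<lambda>z. of_real (1 - t) * A z + of_real t * B z)
      \<le> (\<integral>\<^sup>+ z. ennreal (1 - t) * ennreal (cmod (A z) powr p z * ?w z)
        + ennreal t * ennreal (cmod (B z) powr p z * ?w z) \<partial>lebesgue)"
    unfolding fock_modular_def by (intro nn_integral_mono pointwise)
  also have "\<dots> = ennreal (1 - t) * fock_modular p A + ennreal t * fock_modular p B"
    using fock_integrand_measurable[OF p A] fock_integrand_measurable[OF p B] unfolding fock_modular_def
    by (subst nn_integral_add) (auto simp: nn_integral_cmult)
  finally show ?thesis .
qed

lemma fock_modular_scale:
  assumes p: "var_exponent p" and A: "A \<in> borel_measurable lebesgue" and a: "0 \<le> a" "a \<le> 1"
  shows "fock_modular p (\<lambda>z. of_real a * A z) \<le> ennreal a * fock_modular p A"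
  using fock_modular_convex[OF p A measurable_const, of 0 "1 - a"] a by simp

lemma fock_modular_diff_le_1:
  assumes p: "var_exponent p" and A: "A \<in> borel_measurable lebesgue" and B: "B \<in> borel_measurable lebesgue"
    and "fock_modular p (\<lambda>z. A z / of_real e) \<le> 1" "fock_modular p (\<lambda>z. B z / of_real e) \<le> 1"
  shows "fock_modular p (\<lambda>z. (A z - B z) / of_real (2 * e)) \<le> 1"
proof -
  have "fock_modular p (\<lambda>z. (A z - B z) / of_real (2 * e))
      = fock_modular p (\<lambda>z. of_real (1 - 1/2) * (A z / of_real e) + of_real (1/2) * (- B z / of_real e))"
    by (rule fock_modular_cong) (simp add: field_simps diff_divide_distrib)
  also have "\<dots> \<le> ennreal (1 - 1/2) * fock_modular p (\<lambda>z. A z / of_real e)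
      + ennreal (1/2) * fock_modular p (\<lambda>z. - B z / of_real e)"
    using A B by (intro fock_modular_convex[OF p]) auto
  also have "fock_modular p (\<lambda>z. - B z / of_real e) = fock_modular p (\<lambda>z. B z / of_real e)"
    by (rule fock_modular_cong) simp
  also have "ennreal (1 - 1/2) * fock_modular p (\<lambda>z. A z / of_real e)
      + ennreal (1/2) * fock_modular p (\<lambda>z. B z / of_real e) \<le> ennreal (1 - 1/2) * 1 + ennreal (1/2) * 1"
    using assms(4,5) by (intro add_mono mult_left_mono) auto
  also have "\<dots> = 1"
    unfolding mult_1_right by (subst ennreal_plus[symmetric]) auto
  finally show ?thesis .
qed

lemma fock_modular_le_of_tendsto:
  assumes p: "var_exponent p" and H: "\<And>n. H n \<in> borel_measurable lebesgue"
    and lim: "\<And>z. (\<lambda>n. H n z) \<longlonglongrightarrow> H0 z"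
    and bound: "eventually (\<lambda>n. fock_modular p (H n) \<le> c) sequentially"
  shows "fock_modular p H0 \<le> c"
proof -
  define u where "u n z = ennreal (cmod (H n z) powr p z * exp (- p z * (cmod z)\<^sup>2))" for n z
  have u_lim: "(\<lambda>n. u n z) \<longlonglongrightarrow> ennreal (cmod (H0 z) powr p z * exp (- p z * (cmod z)\<^sup>2))" for z
    unfolding u_def using var_exponent_ge_1[OF p, of z]
    by (intro tendsto_ennrealI tendsto_mult_right tendsto_powr' tendsto_norm lim) auto
  have "fock_modular p H0 = (\<integral>\<^sup>+ z. liminf (\<lambda>n. u n z) \<partial>lebesgue)"
    unfolding fock_modular_def using lim_imp_Liminf[OF _ u_lim] by simp
  also have "\<dots> \<le> liminf (\<lambda>n. integral\<^sup>N lebesgue (u n))"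
    unfolding u_def by (intro nn_integral_liminf fock_integrand_measurable[OF p H])
  also have "\<dots> \<le> c"
    using bound unfolding u_def fock_modular_def[symmetric]
    by (intro order_trans[OF Liminf_le_Limsup Limsup_bounded]) simp_all
  finally show ?thesis .
qed

lemma AE_zero_of_fock_modular_le_1:
  assumes p: "var_exponent p" and H: "H \<in> borel_measurable lebesgue"
    and small: "\<And>e. 0 < e \<Longrightarrow> fock_modular p (\<lambda>z. H z / of_real e) \<le> 1"
  shows "AE z in lebesgue. H z = 0"
proof -
  have le: "fock_modular p H \<le> ennreal e" if "0 < e" "e \<le> 1" for e
  proof -
    have "fock_modular p H = fock_modular p (\<lambda>z. of_real e * (H z / of_real e))"
      using that by simp
    also have "\<dots> \<le> ennreal e * fock_modular p (\<lambda>z. H z / of_real e)"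
      using H that by (intro fock_modular_scale[OF p]) auto
    also have "\<dots> \<le> ennreal e"
      using mult_left_mono[OF small[OF that(1)], of "ennreal e"] by simp
    finally show ?thesis .
  qed
  have "fock_modular p H \<le> 0"
  proof (rule ennreal_le_epsilon)
    fix e :: real
    assume "0 < e"
    then have "fock_modular p H \<le> ennreal (min e 1)"
      by (intro le) auto
    also have "\<dots> \<le> ennreal e"
      by (simp add: ennreal_leI)
    finally show "fock_modular p H \<le> 0 + ennreal e"
      by simp
  qed
  then have "AE z in lebesgue. ennreal (cmod (H z) powr p z * exp (- p z * (cmod z)\<^sup>2)) = 0"
    unfolding fock_modular_def using fock_integrand_measurable[OF p H] by (simp add: nn_integral_0_iff_AE)
  then show ?thesis
    by (rule eventually_mono) (simp add: mult_le_0_iff)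
qed

section \<open>Point evaluations\<close>

definition fock_eval_bound :: "real \<Rightarrow> complex \<Rightarrow> real" where
  "fock_eval_bound M z = 1 + exp (M * (cmod z + 1)\<^sup>2) / pi"

lemma continuous_on_fock_eval_bound: "continuous_on S (fock_eval_bound M)"
  unfolding fock_eval_bound_def by (intro continuous_intros) simp

lemma nn_integral_ball_le_fock_modular:
  assumes p: "var_exponent p" and M: "AE w in lebesgue. p w \<le> M" "0 \<le> M"
    and H: "H \<in> borel_measurable lebesgue"
  shows "(\<integral>\<^sup>+ w. indicator (ball z 1) w * ennreal (cmod (H w)) \<partial>lborel)
     \<le> ennreal pi + ennreal (exp (M * (cmod z + 1)\<^sup>2)) * fock_modular p H"
proof -
  define E where "E = exp (M * (cmod z + 1)\<^sup>2)"
  have pointwise: "indicator (ball z 1) w * ennreal (cmod (H w))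
      \<le> indicator (ball z 1) w + ennreal E * ennreal (cmod (H w) powr p w * exp (- p w * (cmod w)\<^sup>2))"
    if "p w \<le> M" for w
  proof (cases "w \<in> ball z 1")
    case True
    have "cmod w \<le> cmod z + 1"
      using True norm_triangle_ineq2[of w z] by (simp add: dist_norm norm_minus_commute)
    then have "p w * (cmod w)\<^sup>2 \<le> M * (cmod z + 1)\<^sup>2"
      using that M(2) var_exponent_ge_1[OF p, of w] by (intro mult_mono power_mono) auto
    then have weight: "1 \<le> E * exp (- p w * (cmod w)\<^sup>2)"
      unfolding E_def by (simp flip: exp_add)
    have "cmod (H w) \<le> 1 + cmod (H w) powr p w"
    proof (cases "cmod (H w) \<le> 1")
      case False
      then have "cmod (H w) powr 1 \<le> cmod (H w) powr p w"
        using var_exponent_ge_1[OF p] by (intro powr_mono) auto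
      then show ?thesis
        by simp
    qed (use powr_ge_zero[of "cmod (H w)" "p w"] in linarith)
    also have "\<dots> \<le> 1 + E * (cmod (H w) powr p w * exp (- p w * (cmod w)\<^sup>2))"
      using mult_left_mono[OF weight powr_ge_zero[of "cmod (H w)" "p w"]] by (simp add: mult_ac)
    finally have "ennreal (cmod (H w)) \<le> ennreal (1 + E * (cmod (H w) powr p w * exp (- p w * (cmod w)\<^sup>2)))"
      by (rule ennreal_leI)
    then show ?thesis
      using True by (simp add: E_def ennreal_plus ennreal_mult)
  qed simp
  have "(\<integral>\<^sup>+ w. indicator (ball z 1) w * ennreal (cmod (H w)) \<partial>lborel)
      = (\<integral>\<^sup>+ w. indicator (ball z 1) w * ennreal (cmod (H w)) \<partial>lebesgue)"
    by (rule nn_integral_completion[symmetric])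
  also have "\<dots> \<le> (\<integral>\<^sup>+ w. indicator (ball z 1) w
      + ennreal E * ennreal (cmod (H w) powr p w * exp (- p w * (cmod w)\<^sup>2)) \<partial>lebesgue)"
    using M(1) pointwise by (intro nn_integral_mono_AE) (auto elim: eventually_mono)
  also have "\<dots> = emeasure lebesgue (ball z 1) + ennreal E * fock_modular p H"
    using fock_integrand_measurable[OF p H] unfolding fock_modular_def
    by (subst nn_integral_add) (auto simp: nn_integral_cmult borel_measurable_indicator)
  also have "emeasure lebesgue (ball z 1) = ennreal pi"
    by (simp add: emeasure_completion emeasure_ball unit_ball_vol_2)
  finally show ?thesis
    by (simp add: E_def)
qed

lemma norm_le_fock_eval_bound:
  assumes p: "var_exponent p" and M: "AE w in lebesgue. p w \<le> M" "0 \<le> M"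
    and G: "G holomorphic_on UNIV" and modular: "fock_modular p G \<le> 1"
  shows "cmod (G z) \<le> fock_eval_bound M z"
proof -
  define E where "E = exp (M * (cmod z + 1)\<^sup>2)"
  from order_trans[OF entire_sub_mean_value_disc[OF G]
      nn_integral_ball_le_fock_modular[OF p M entire_measurable_lebesgue[OF G]]]
  have "ennreal (pi * cmod (G z)) \<le> ennreal pi + ennreal E * fock_modular p G"
    by (simp add: E_def)
  also have "\<dots> \<le> ennreal (pi + E)"
    using mult_left_mono[OF modular] by (simp add: E_def ennreal_plus)
  finally have "pi * cmod (G z) \<le> pi + E"
    by (subst (asm) ennreal_le_iff) (auto simp: E_def)
  then show ?thesis
    unfolding fock_eval_bound_def E_def[symmetric] by (simp add: field_simps)
qed

section \<open>The space and its Luxemburg norm\<close>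

lemma Lvar_measurable: "H \<in> Lvar p \<Longrightarrow> H \<in> borel_measurable lebesgue"
  by (simp add: Lvar_def)

lemma LvarI: "H \<in> borel_measurable lebesgue \<Longrightarrow> fock_modular p H < \<infinity> \<Longrightarrow> H \<in> Lvar p"
  unfolding Lvar_def by (auto intro!: exI[of _ 1])

lemma Lvar_add:
  assumes p: "var_exponent p" and f: "f \<in> Lvar p" and g: "g \<in> Lvar p"
  shows "(\<lambda>z. f z + g z) \<in> Lvar p"
proof -
  obtain l1 where l1: "l1 > 0" "fock_modular p (\<lambda>z. of_real l1 * f z) < \<infinity>"
    using f by (auto simp: Lvar_def)
  obtain l2 where l2: "l2 > 0" "fock_modular p (\<lambda>z. of_real l2 * g z) < \<infinity>"
    using g by (auto simp: Lvar_def)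
  define l where "l = min l1 l2"
  have [measurable]: "f \<in> borel_measurable lebesgue" "g \<in> borel_measurable lebesgue"
    using f g by (simp_all add: Lvar_measurable)
  have "fock_modular p (\<lambda>z. of_real l * f z) \<le> fock_modular p (\<lambda>z. of_real l1 * f z)"
    "fock_modular p (\<lambda>z. of_real l * g z) \<le> fock_modular p (\<lambda>z. of_real l2 * g z)"
    using l1(1) l2(1) by (auto intro!: fock_modular_mono[OF p] mult_right_mono simp: norm_mult l_def)
  with l1(2) l2(2) have finite: "fock_modular p (\<lambda>z. of_real l * f z) < \<infinity>"
    "fock_modular p (\<lambda>z. of_real l * g z) < \<infinity>"
    by auto
  have "fock_modular p (\<lambda>z. of_real (l / 2) * (f z + g z))
      = fock_modular p (\<lambda>z. of_real (1 - 1/2) * (of_real l * f z) + of_real (1/2) * (of_real l * g z))"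
    by (intro fock_modular_cong arg_cong[where f = cmod]) (simp add: field_simps)
  also have "\<dots> \<le> ennreal (1 - 1/2) * fock_modular p (\<lambda>z. of_real l * f z)
      + ennreal (1/2) * fock_modular p (\<lambda>z. of_real l * g z)"
    by (rule fock_modular_convex[OF p]) auto
  also have "\<dots> < \<infinity>"
    using finite ennreal_less_top[of "1 - 1/2"] ennreal_less_top[of "1/2"]
    by (simp only: infinity_ennreal_def ennreal_add_less_top ennreal_mult_less_top) blast
  finally show ?thesis
    using l1(1) l2(1) unfolding Lvar_def l_def by (auto intro!: exI[of _ "min l1 l2 / 2"])
qed

lemma Lvar_cmult:
  assumes f: "f \<in> Lvar p"
  shows "(\<lambda>z. c * f z) \<in> Lvar p"
proof (cases "c = 0")
  case True
  then show ?thesis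
    by (simp add: LvarI)
next
  case False
  obtain l where l: "l > 0" "fock_modular p (\<lambda>z. of_real l * f z) < \<infinity>"
    using f by (auto simp: Lvar_def)
  have [measurable]: "f \<in> borel_measurable lebesgue"
    using f by (rule Lvar_measurable)
  have "fock_modular p (\<lambda>z. of_real (l / cmod c) * (c * f z)) = fock_modular p (\<lambda>z. of_real l * f z)"
    using False l by (intro fock_modular_cong) (simp add: norm_mult norm_divide)
  then show ?thesis
    using l False unfolding Lvar_def by (auto intro!: exI[of _ "l / cmod c"])
qed

lemma Lvar_diff:
  assumes "var_exponent p" "f \<in> Lvar p" "g \<in> Lvar p"
  shows "(\<lambda>z. f z - g z) \<in> Lvar p"
  using Lvar_add[OF assms(1,2) Lvar_cmult[OF assms(3), of "-1"]] by simp

lemma Lvar_ex_fock_modular_le_1: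
  assumes p: "var_exponent p" and f: "f \<in> Lvar p"
  shows "\<exists>lam>0. fock_modular p (\<lambda>z. f z / of_real lam) \<le> 1"
proof -
  obtain l where l: "l > 0" "fock_modular p (\<lambda>z. of_real l * f z) < \<infinity>"
    using f by (auto simp: Lvar_def)
  then obtain r where r: "fock_modular p (\<lambda>z. of_real l * f z) = ennreal r" "0 \<le> r"
    by (cases "fock_modular p (\<lambda>z. of_real l * f z)") auto
  have [measurable]: "f \<in> borel_measurable lebesgue"
    using f by (rule Lvar_measurable)
  define c where "c = max 1 r"
  have c: "1 \<le> c" "r \<le> c"
    by (auto simp: c_def)
  have "fock_modular p (\<lambda>z. f z / of_real (c / l))
      = fock_modular p (\<lambda>z. of_real (1 / c) * (of_real l * f z))"
    using l c by (intro fock_modular_cong) (simp add: field_simps)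
  also have "\<dots> \<le> ennreal (1 / c) * fock_modular p (\<lambda>z. of_real l * f z)"
    using c by (intro fock_modular_scale[OF p]) auto
  also have "\<dots> = ennreal (1 / c) * ennreal r"
    using r(1) by simp
  also have "\<dots> \<le> 1"
    using c r(2) by (simp add: ennreal_mult[symmetric] divide_le_eq_1)
  finally show ?thesis
    using l c by (intro exI[of _ "c / l"]) auto
qed

lemma Lvar_norm_less_imp_fock_modular_le_1:
  assumes p: "var_exponent p" and H: "H \<in> Lvar p" and less: "Lvar_norm p H < e"
  shows "fock_modular p (\<lambda>z. H z / of_real e) \<le> 1"
proof -
  let ?S = "{lam. 0 < lam \<and> fock_modular p (\<lambda>z. H z / of_real lam) \<le> 1}"
  have "?S \<noteq> {}"
    using Lvar_ex_fock_modular_le_1[OF p H] by auto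
  from cInf_lessD[OF this] less obtain lam where lam: "lam \<in> ?S" "lam < e"
    unfolding Lvar_norm_def by blast
  have "fock_modular p (\<lambda>z. H z / of_real e) \<le> fock_modular p (\<lambda>z. H z / of_real lam)"
    using lam by (intro fock_modular_mono[OF p]) (simp add: norm_divide divide_left_mono)
  also have "\<dots> \<le> 1"
    using lam(1) by simp
  finally show ?thesis .
qed

lemma Lvar_norm_le_of_fock_modular_le_1:
  assumes "0 < e" "fock_modular p (\<lambda>z. H z / of_real e) \<le> 1"
  shows "\<bar>Lvar_norm p H\<bar> \<le> e"
proof -
  let ?S = "{lam. 0 < lam \<and> fock_modular p (\<lambda>z. H z / of_real lam) \<le> 1}"
  have "e \<in> ?S"
    using assms by simp
  moreover have "bdd_below ?S"
    by (auto simp: bdd_below_def intro!: exI[of _ 0])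
  ultimately have "Inf ?S \<le> e" "0 \<le> Inf ?S"
    by (auto intro: cInf_lower cInf_greatest)
  then show ?thesis
    unfolding Lvar_norm_def by simp
qed

definition fock_modular_null :: "(complex \<Rightarrow> real) \<Rightarrow> (nat \<Rightarrow> complex \<Rightarrow> complex) \<Rightarrow> bool" where
  "fock_modular_null p F \<longleftrightarrow>
    (\<forall>e>0. \<forall>\<^sub>F n in sequentially. fock_modular p (\<lambda>z. F n z / of_real e) \<le> 1)"

definition fock_modular_Cauchy :: "(complex \<Rightarrow> real) \<Rightarrow> (nat \<Rightarrow> complex \<Rightarrow> complex) \<Rightarrow> bool" where
  "fock_modular_Cauchy p F \<longleftrightarrow>
    (\<forall>e>0. \<exists>N. \<forall>m\<ge>N. \<forall>n\<ge>N. fock_modular p (\<lambda>z. (F m z - F n z) / of_real e) \<le> 1)"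

lemma Lvar_norm_tendsto_0_iff:
  assumes p: "var_exponent p" and F: "\<And>n. F n \<in> Lvar p"
  shows "(\<lambda>n. Lvar_norm p (F n)) \<longlonglongrightarrow> 0 \<longleftrightarrow> fock_modular_null p F"
proof
  assume "(\<lambda>n. Lvar_norm p (F n)) \<longlonglongrightarrow> 0"
  then show "fock_modular_null p F"
    unfolding fock_modular_null_def
    by (auto elim!: eventually_mono[OF order_tendstoD(2)] intro: Lvar_norm_less_imp_fock_modular_le_1[OF p F])
next
  assume null: "fock_modular_null p F"
  show "(\<lambda>n. Lvar_norm p (F n)) \<longlonglongrightarrow> 0"
  proof (rule tendstoI)
    fix r :: real
    assume "0 < r"
    then have "0 < r / 2"
      by simp
    with null have "\<forall>\<^sub>F n in sequentially. fock_modular p (\<lambda>z. F n z / of_real (r / 2)) \<le> 1"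
      unfolding fock_modular_null_def by blast
    then show "\<forall>\<^sub>F n in sequentially. dist (Lvar_norm p (F n)) 0 < r"
      by (rule eventually_mono) (use Lvar_norm_le_of_fock_modular_le_1[of "r / 2"] \<open>0 < r\<close> in fastforce)
  qed
qed

section \<open>Completeness and closedness\<close>

lemma uniformly_Cauchy_on_of_weighted_Cauchy:
  fixes F :: "nat \<Rightarrow> 'a::metric_space \<Rightarrow> 'b::real_normed_vector"
  assumes S: "compact S" and K: "continuous_on S K"
    and Cauchy: "\<And>e. 0 < e \<Longrightarrow> \<exists>N. \<forall>m\<ge>N. \<forall>n\<ge>N. \<forall>z\<in>S. norm (F m z - F n z) \<le> e * K z"
  shows "uniformly_Cauchy_on S F"
proof (rule uniformly_Cauchy_onI)
  fix e :: real
  assume "0 < e"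
  obtain B where B: "0 < B" "\<And>z. z \<in> S \<Longrightarrow> K z \<le> B"
    using compact_imp_bounded[OF compact_continuous_image[OF K S]]
    by (auto simp: bounded_pos dest: abs_le_D1)
  obtain N where N: "\<forall>m\<ge>N. \<forall>n\<ge>N. \<forall>z\<in>S. norm (F m z - F n z) \<le> e / (2 * B) * K z"
    using Cauchy[of "e / (2 * B)"] \<open>0 < e\<close> B(1) by auto
  have "dist (F m z) (F n z) < e" if "z \<in> S" "m \<ge> N" "n \<ge> N" for m n z
  proof -
    have "norm (F m z - F n z) \<le> e / (2 * B) * K z"
      using N that by blast
    also have "\<dots> \<le> e / (2 * B) * B"
      using B that \<open>0 < e\<close> by (intro mult_left_mono) auto
    also have "\<dots> < e"
      using B(1) \<open>0 < e\<close> by simp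
    finally show ?thesis
      by (simp add: dist_norm)
  qed
  then show "\<exists>N. \<forall>z\<in>S. \<forall>m\<ge>N. \<forall>n\<ge>N. dist (F m z) (F n z) < e"
    by blast
qed

lemma entire_limit_of_locally_uniformly_Cauchy:
  assumes hol: "\<And>n. F n holomorphic_on UNIV"
    and Cauchy: "\<And>z. \<exists>d>0. uniformly_Cauchy_on (cball z d) F"
  obtains g where "g holomorphic_on UNIV" "\<And>z. (\<lambda>n. F n z) \<longlonglongrightarrow> g z"
proof -
  define g where "g z = lim (\<lambda>n. F n z)" for z
  have lim: "(\<lambda>n. F n z) \<longlonglongrightarrow> g z" for z
  proof -
    obtain d where "d > 0" "uniformly_Cauchy_on (cball z d) F"
      using Cauchy by blast
    then have "Cauchy (\<lambda>n. F n z)"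
      by (intro uniformly_Cauchy_imp_Cauchy) auto
    then show ?thesis
      unfolding g_def by (simp add: Cauchy_convergent_iff convergent_LIMSEQ_iff)
  qed
  have "g holomorphic_on UNIV"
  proof (rule holomorphic_uniform_sequence[OF open_UNIV hol])
    fix z :: complex
    obtain d where d: "d > 0" "uniformly_Cauchy_on (cball z d) F"
      using Cauchy by blast
    then obtain l where l: "uniform_limit (cball z d) F l sequentially"
      using Cauchy_uniformly_convergent uniformly_convergent_on_def by blast
    have "l w = g w" if "w \<in> cball z d" for w
      using LIMSEQ_unique[OF tendsto_uniform_limitI[OF l that] lim] .
    with l have "uniform_limit (cball z d) F g sequentially"
      using uniform_limit_cong'[of "cball z d" F F l g sequentially] by simp
    with d(1) show "\<exists>d>0. cball z d \<subseteq> UNIV \<and> uniform_limit (cball z d) F g sequentially"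
      by blast
  qed
  then show thesis
    using lim by (rule that)
qed

lemma fock_modular_Cauchy_imp_entire_limit:
  assumes p: "var_exponent p" and M: "AE z in lebesgue. p z \<le> M" "0 \<le> M"
    and hol: "\<And>n. F n holomorphic_on UNIV" and Cauchy: "fock_modular_Cauchy p F"
  obtains g where "g holomorphic_on UNIV" "fock_modular_null p (\<lambda>n z. F n z - g z)"
proof -
  have weighted: "\<exists>N. \<forall>m\<ge>N. \<forall>n\<ge>N. \<forall>z\<in>S. norm (F m z - F n z) \<le> e * fock_eval_bound M z"
    if "0 < e" for e and S :: "complex set"
  proof -
    obtain N where N: "\<forall>m\<ge>N. \<forall>n\<ge>N. fock_modular p (\<lambda>z. (F m z - F n z) / of_real e) \<le> 1"
      using Cauchy \<open>0 < e\<close> unfolding fock_modular_Cauchy_def by blast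
    have "norm (F m z - F n z) \<le> e * fock_eval_bound M z" if "m \<ge> N" "n \<ge> N" for m n z
    proof -
      have "(\<lambda>z. (F m z - F n z) / of_real e) holomorphic_on UNIV"
        using \<open>0 < e\<close> by (intro holomorphic_intros hol) simp
      from norm_le_fock_eval_bound[OF p M this] N that
      have "norm ((F m z - F n z) / of_real e) \<le> fock_eval_bound M z"
        by blast
      with \<open>0 < e\<close> show ?thesis
        by (simp add: norm_divide divide_le_eq mult.commute)
    qed
    then show ?thesis
      by blast
  qed
  have "uniformly_Cauchy_on (cball z 1) F" for z
    by (rule uniformly_Cauchy_on_of_weighted_Cauchy[OF compact_cball continuous_on_fock_eval_bound weighted])
  then obtain g where g: "g holomorphic_on UNIV" and lim: "\<And>z. (\<lambda>n. F n z) \<longlonglongrightarrow> g z"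
    using entire_limit_of_locally_uniformly_Cauchy[of F, OF hol] zero_less_one by blast
  have "fock_modular_null p (\<lambda>n z. F n z - g z)"
    unfolding fock_modular_null_def
  proof (intro allI impI)
    fix e :: real
    assume "0 < e"
    then obtain N where N: "\<forall>m\<ge>N. \<forall>n\<ge>N. fock_modular p (\<lambda>z. (F m z - F n z) / of_real e) \<le> 1"
      using Cauchy unfolding fock_modular_Cauchy_def by blast
    have "fock_modular p (\<lambda>z. (F n z - g z) / of_real e) \<le> 1" if "n \<ge> N" for n
    proof (rule fock_modular_le_of_tendsto[OF p])
      show "(\<lambda>z. (F n z - F m z) / of_real e) \<in> borel_measurable lebesgue" for m
        using entire_measurable_lebesgue[OF hol] by measurable
      show "(\<lambda>m. (F n z - F m z) / of_real e) \<longlonglongrightarrow> (F n z - g z) / of_real e" for z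
        using \<open>0 < e\<close> by (intro tendsto_intros lim) simp
      show "\<forall>\<^sub>F m in sequentially. fock_modular p (\<lambda>z. (F n z - F m z) / of_real e) \<le> 1"
        unfolding eventually_sequentially using N that by blast
    qed
    then show "\<forall>\<^sub>F n in sequentially. fock_modular p (\<lambda>z. (F n z - g z) / of_real e) \<le> 1"
      unfolding eventually_sequentially by blast
  qed
  with g show thesis
    by (rule that)
qed

lemma Lvar_of_fock_modular_null:
  assumes p: "var_exponent p" and F: "\<And>n. F n \<in> Lvar p" and g: "g \<in> borel_measurable lebesgue"
    and null: "fock_modular_null p (\<lambda>n z. F n z - g z)"
  shows "g \<in> Lvar p"
proof -
  have "\<forall>\<^sub>F n in sequentially. fock_modular p (\<lambda>z. (F n z - g z) / of_real 1) \<le> 1"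
    using null zero_less_one unfolding fock_modular_null_def by blast
  then obtain N where "fock_modular p (\<lambda>z. (F N z - g z) / of_real 1) \<le> 1"
    unfolding eventually_sequentially by blast
  moreover have "(\<lambda>z. F N z - g z) \<in> borel_measurable lebesgue"
    using Lvar_measurable[OF F] g by measurable
  ultimately have "(\<lambda>z. F N z - g z) \<in> Lvar p"
    by (intro LvarI) (auto simp: le_less_trans)
  from Lvar_diff[OF p F[of N] this] show ?thesis
    by simp
qed

lemma Fvar_complete:
  assumes p: "var_exponent p" and M: "AE z in lebesgue. p z \<le> M" "0 \<le> M"
    and F: "\<And>n. F n \<in> Fvar p"
    and Cauchy: "\<forall>e>0. \<exists>N. \<forall>m\<ge>N. \<forall>n\<ge>N. Lvar_norm p (\<lambda>z. F m z - F n z) < e"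
  shows "\<exists>g\<in>Fvar p. (\<lambda>n. Lvar_norm p (\<lambda>z. F n z - g z)) \<longlonglongrightarrow> 0"
proof -
  have L: "F n \<in> Lvar p" and hol: "F n holomorphic_on UNIV" for n
    using F by (simp_all add: Fvar_def)
  have "fock_modular_Cauchy p F"
    unfolding fock_modular_Cauchy_def
  proof (intro allI impI)
    fix e :: real
    assume "0 < e"
    with Cauchy obtain N where "\<forall>m\<ge>N. \<forall>n\<ge>N. Lvar_norm p (\<lambda>z. F m z - F n z) < e"
      by blast
    then show "\<exists>N. \<forall>m\<ge>N. \<forall>n\<ge>N. fock_modular p (\<lambda>z. (F m z - F n z) / of_real e) \<le> 1"
      using Lvar_norm_less_imp_fock_modular_le_1[OF p Lvar_diff[OF p L L]] by blast
  qed
  then obtain g where g: "g holomorphic_on UNIV" and null: "fock_modular_null p (\<lambda>n z. F n z - g z)"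
    using fock_modular_Cauchy_imp_entire_limit[of p M F, OF p M hol] by blast
  have "g \<in> Lvar p"
    using Lvar_of_fock_modular_null[OF p L entire_measurable_lebesgue[OF g] null] .
  with g null show ?thesis
    using Lvar_norm_tendsto_0_iff[OF p Lvar_diff[OF p L]] by (auto simp: Fvar_def)
qed

lemma Fvar_closed:
  assumes p: "var_exponent p" and M: "AE z in lebesgue. p z \<le> M" "0 \<le> M"
    and F: "\<And>n. F n \<in> Fvar p" and f: "f \<in> Lvar p"
    and lim: "(\<lambda>n. Lvar_norm p (\<lambda>z. F n z - f z)) \<longlonglongrightarrow> 0"
  shows "\<exists>g\<in>Fvar p. AE z in lebesgue. g z = f z"
proof -
  have L: "F n \<in> Lvar p" and hol: "F n holomorphic_on UNIV" for n
    using F by (simp_all add: Fvar_def)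
  have [measurable]: "F n \<in> borel_measurable lebesgue" "f \<in> borel_measurable lebesgue" for n
    using L[of n] f by (simp_all add: Lvar_measurable)
  have f_null: "fock_modular_null p (\<lambda>n z. F n z - f z)"
    using lim Lvar_norm_tendsto_0_iff[OF p Lvar_diff[OF p L f]] by simp
  have "fock_modular_Cauchy p F"
    unfolding fock_modular_Cauchy_def
  proof (intro allI impI)
    fix e :: real
    assume "0 < e"
    then have "0 < e / 2"
      by simp
    with f_null have "\<forall>\<^sub>F n in sequentially. fock_modular p (\<lambda>z. (F n z - f z) / of_real (e / 2)) \<le> 1"
      unfolding fock_modular_null_def by blast
    then obtain N where N: "\<And>n. n \<ge> N \<Longrightarrow> fock_modular p (\<lambda>z. (F n z - f z) / of_real (e / 2)) \<le> 1"
      unfolding eventually_sequentially by blast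
    have "fock_modular p (\<lambda>z. (F m z - F n z) / of_real e) \<le> 1" if "m \<ge> N" "n \<ge> N" for m n
      using fock_modular_diff_le_1[OF p _ _ N[OF that(1)] N[OF that(2)]] by simp
    then show "\<exists>N. \<forall>m\<ge>N. \<forall>n\<ge>N. fock_modular p (\<lambda>z. (F m z - F n z) / of_real e) \<le> 1"
      by blast
  qed
  then obtain g where g: "g holomorphic_on UNIV" and g_null: "fock_modular_null p (\<lambda>n z. F n z - g z)"
    using fock_modular_Cauchy_imp_entire_limit[of p M F, OF p M hol] by blast
  have [measurable]: "g \<in> borel_measurable lebesgue"
    using g by (rule entire_measurable_lebesgue)
  have "fock_modular p (\<lambda>z. (g z - f z) / of_real e) \<le> 1" if "0 < e" for e
  proof -
    have "0 < e / 2"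
      using that by simp
    with f_null g_null have
      "\<forall>\<^sub>F n in sequentially. fock_modular p (\<lambda>z. (F n z - f z) / of_real (e / 2)) \<le> 1"
      "\<forall>\<^sub>F n in sequentially. fock_modular p (\<lambda>z. (F n z - g z) / of_real (e / 2)) \<le> 1"
      unfolding fock_modular_null_def by blast+
    from eventually_conj[OF this]
    obtain n where
      "fock_modular p (\<lambda>z. (F n z - f z) / of_real (e / 2)) \<le> 1"
      "fock_modular p (\<lambda>z. (F n z - g z) / of_real (e / 2)) \<le> 1"
      unfolding eventually_sequentially by blast
    from fock_modular_diff_le_1[OF p _ _ this] show ?thesis
      by simp
  qed
  then have "AE z in lebesgue. g z - f z = 0"
    by (intro AE_zero_of_fock_modular_le_1[OF p]) auto
  moreover have "g \<in> Lvar p"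
    using Lvar_of_fock_modular_null[OF p L _ g_null] by simp
  ultimately show ?thesis
    using g by (auto simp: Fvar_def elim!: eventually_mono)
qed

theorem mainTheorem5:
  fixes p :: "complex \<Rightarrow> real"
  assumes "bounded_var_exponent p"
  shows "Fvar p \<subseteq> Lvar p
    \<and> (\<lambda>z. 0) \<in> Fvar p
    \<and> (\<forall>f\<in>Fvar p. \<forall>g\<in>Fvar p. (\<lambda>z. f z + g z) \<in> Fvar p)
    \<and> (\<forall>c f. f \<in> Fvar p \<longrightarrow> (\<lambda>z. c * f z) \<in> Fvar p)
    \<and> (\<forall>F f. (\<forall>n. F n \<in> Fvar p) \<longrightarrow> f \<in> Lvar p \<longrightarrow>
           (\<lambda>n. Lvar_norm p (\<lambda>z. F n z - f z)) \<longlonglongrightarrow> 0 \<longrightarrow>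
           (\<exists>g\<in>Fvar p. AE z in lebesgue. g z = f z))
    \<and> (\<forall>F. (\<forall>n. F n \<in> Fvar p) \<longrightarrow>
           (\<forall>e>0. \<exists>N. \<forall>m\<ge>N. \<forall>n\<ge>N. Lvar_norm p (\<lambda>z. F m z - F n z) < e) \<longrightarrow>
           (\<exists>g\<in>Fvar p. (\<lambda>n. Lvar_norm p (\<lambda>z. F n z - g z)) \<longlonglongrightarrow> 0))"
proof -
  have p: "var_exponent p"
    using assms by (simp add: bounded_var_exponent_def)
  obtain M0 where "AE z in lebesgue. p z \<le> M0"
    using assms by (auto simp: bounded_var_exponent_def)
  then have M: "AE z in lebesgue. p z \<le> max M0 0" "0 \<le> max M0 0"
    by (auto elim: eventually_mono)
  have "(\<lambda>z. 0) \<in> Fvar p"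
    by (simp add: Fvar_def LvarI)
  then show ?thesis
    using Fvar_closed[OF p M] Fvar_complete[OF p M] Lvar_add[OF p] Lvar_cmult
    by (auto simp: Fvar_def intro!: holomorphic_intros)
qed

end
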